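(* Let $0\le t\le 1$ and $u>0$, and let $D=\mathrm{DASEP}(3,2,2)$ with stationary distribution $\mathrm{Pd}$. Then the following are equivalent: (i) $t=1$; (ii) for every partition $\lambda$ with $\lambda_1\le 2$ and exactly $2$ nonzero parts (i.e. $\lambda\in\{(1,1,0),(2,1,0),(2,2,0)\}$) and all $\mu,\nu\in S_3(\lambda)$, $$\frac{\Pr_\lambda(\mu)}{\Pr_\lambda(\nu)}=\frac{\mathrm{Pd}(\mu)}{\mathrm{Pd}(\nu)}.$$
   Context: For a partition $\lambda=(\lambda_1\ge\dots\ge\lambda_n\ge 0)$ of nonnegative integers, $S_n(\lambda)$ denotes the set of all distinct rearrangements of $\lambda$, viewed as words $(\mu_1,\dots,\mu_n)$ whose positions $1,\dots,n$ lie on a circle. Fix $0\le t\le 1$. ASEP($\lambda$) is the Markov chain on $S_n(\lambda)$ with transition probabilities $P_{\mu,\nu}$ defined as follows. If $\mu$ has entries $i\ne j$ in adjacent positions $k,k+1$ ($1\le k\le n-1$) and $\nu$ is obtained from $\mu$ by swapping them, then $P_{\mu,\nu}=t/n$ if $i>j$ and $P_{\mu,\nu}=1/n$ if $i<j$. If $\mu=(i,\mu_2,\dots,\mu_{n-1},j)$ with $i\ne j$ and $\nu=(j,\mu_2,\dots,\mu_{n-1},i)$, then $P_{\mu,\nu}=t/n$ if $j>i$ and $P_{\mu,\nu}=1/n$ if $i>j$. All other off-diagonal transition probabilities are $0$, and the diagonal entries are chosen so that each row sums to $1$. $\Pr_\lambda$ denotes the stationary distribution of ASEP($\lambda$). Fix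 also $u>0$. For positive integers $n,p,q$ with $n>q$, DASEP$(n,p,q)$ is the Markov chain on the set of words in $\{0,1,\dots,p\}^n$ with exactly $q$ nonzero entries (equivalently, the union of $S_n(\lambda)$ over partitions $\lambda$ with $\lambda_1\le p$ and exactly $q$ nonzero parts). Its transition probabilities are as follows. The two swap rules of ASEP apply, with probabilities $t/(3n)$ and $1/(3n)$ in place of $t/n$ and $1/n$. Replacing a single entry $i$ with $1\le i\le p-1$ by $i+1$ has probability $u/(3n)$. Replacing a single entry $i+1$ with $i\ge 1$ by $i$ has probability $1/(3n)$. All other off-diagonal transition probabilities are $0$, and the diagonal entries make each row sum to $1$. $\mathrm{Pd}$ denotes the stationary distribution of the DASEP. *)

theory Defs
  imports Complex_Main "HOL-Library.Multiset"
begin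

text \<open>Words are lists of naturals; position k (1-based in the paper) is list index k-1.\<close>

definition swap_at :: "nat list \<Rightarrow> nat \<Rightarrow> nat \<Rightarrow> nat list" where
  "swap_at w a b = w[a := w ! b, b := w ! a]"

text \<open>Off-diagonal swap probabilities with weights a (for the t-moves) and b (for the 1-moves):
  adjacent swaps at positions k,k+1 (indices k-1,k, 1 \<le> k \<le> n-1) and the wrap-around swap
  of positions 1 and n.  For ASEP a = t/n, b = 1/n; for DASEP a = t/(3n), b = 1/(3n).
  (For n \<ge> 3 all these moves lead to distinct words, so at most one summand is nonzero.)\<close>
definition swap_rate :: "real \<Rightarrow> real \<Rightarrow> nat \<Rightarrow> nat list \<Rightarrow> nat list \<Rightarrow> real" where
  "swap_rate a b n \<mu> \<nu> =
     (\<Sum>k\<in>{1..n-1}.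
        if \<mu> ! (k-1) \<noteq> \<mu> ! k \<and> \<nu> = swap_at \<mu> (k-1) k
        then (if \<mu> ! (k-1) > \<mu> ! k then a else b) else 0)
   + (if \<mu> ! 0 \<noteq> \<mu> ! (n-1) \<and> \<nu> = swap_at \<mu> 0 (n-1)
      then (if \<mu> ! (n-1) > \<mu> ! 0 then a else b) else 0)"

definition chain_P :: "nat list set \<Rightarrow> (nat list \<Rightarrow> nat list \<Rightarrow> real) \<Rightarrow> nat list \<Rightarrow> nat list \<Rightarrow> real" where
  "chain_P S off \<mu> \<nu> = (if \<mu> = \<nu> then 1 - (\<Sum>\<nu>'\<in>S - {\<mu>}. off \<mu> \<nu>') else off \<mu> \<nu>)"

definition S_n :: "nat list \<Rightarrow> nat list set" where
  "S_n lam = {\<mu>. mset \<mu> = mset lam}"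

definition is_partition :: "nat \<Rightarrow> nat list \<Rightarrow> bool" where
  "is_partition n lam \<longleftrightarrow> length lam = n \<and> sorted_wrt (\<ge>) lam"

definition ASEP_P :: "real \<Rightarrow> nat \<Rightarrow> nat list \<Rightarrow> nat list \<Rightarrow> nat list \<Rightarrow> real" where
  "ASEP_P t n lam = chain_P (S_n lam) (swap_rate (t / n) (1 / n) n)"

definition DASEP_states :: "nat \<Rightarrow> nat \<Rightarrow> nat \<Rightarrow> nat list set" where
  "DASEP_states n p q = {\<mu>. length \<mu> = n \<and> set \<mu> \<subseteq> {0..p} \<and> length (filter (\<lambda>x. x \<noteq> 0) \<mu>) = q}"

definition DASEP_off :: "real \<Rightarrow> real \<Rightarrow> nat \<Rightarrow> nat \<Rightarrow> nat list \<Rightarrow> nat list \<Rightarrow> real" where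
  "DASEP_off t u n p \<mu> \<nu> =
     swap_rate (t / (3 * n)) (1 / (3 * n)) n \<mu> \<nu>
   + (\<Sum>k\<in>{0..<n}.
        (if 1 \<le> \<mu> ! k \<and> \<mu> ! k \<le> p - 1 \<and> \<nu> = \<mu>[k := \<mu> ! k + 1] then u / (3 * n) else 0)
      + (if 2 \<le> \<mu> ! k \<and> \<nu> = \<mu>[k := \<mu> ! k - 1] then 1 / (3 * n) else 0))"

definition DASEP_P :: "real \<Rightarrow> real \<Rightarrow> nat \<Rightarrow> nat \<Rightarrow> nat \<Rightarrow> nat list \<Rightarrow> nat list \<Rightarrow> real" where
  "DASEP_P t u n p q = chain_P (DASEP_states n p q) (DASEP_off t u n p)"

definition stationary :: "nat list set \<Rightarrow> (nat list \<Rightarrow> nat list \<Rightarrow> real) \<Rightarrow> (nat list \<Rightarrow> real) \<Rightarrow> bool" where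
  "stationary S P \<pi> \<longleftrightarrow> (\<forall>\<mu>\<in>S. \<pi> \<mu> \<ge> 0) \<and> (\<Sum>\<mu>\<in>S. \<pi> \<mu>) = 1 \<and>
     (\<forall>\<nu>\<in>S. (\<Sum>\<mu>\<in>S. \<pi> \<mu> * P \<mu> \<nu>) = \<pi> \<nu>)"

end

theory Submission
  imports Defs "HOL-Combinatorics.Multiset_Permutations"
begin

text \<open>Both chains are irreducible, so each stationary distribution is the normalisation of any
  positive solution of the global balance equations.  On three sites such solutions can be
  written down and checked: for the ASEP on \<open>S\<^sub>3(\<lambda>)\<close> a word has weight \<open>t + 2\<close> if it is a
  cyclic rotation of \<open>\<lambda>\<close> and \<open>2t + 1\<close> otherwise, and DASEP(3,2,2) admits explicit weights
  polynomial in \<open>t\<close> and \<open>u\<close>.  At \<open>t = 1\<close> both are constant on each \<open>S\<^sub>3(\<lambda>)\<close>, so all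
  ratios are \<open>1\<close>.  Conversely the words \<open>210\<close> and \<open>201\<close> give
  \<open>(t + 2)/(2t + 1) = (2t + 5 + u)/(4t + 3 + u)\<close>, i.e. \<open>(1 - t)(1 + u) = 0\<close>.\<close>

section \<open>Stationary distributions of irreducible chains\<close>

definition balanced :: "'a set \<Rightarrow> ('a \<Rightarrow> 'a \<Rightarrow> real) \<Rightarrow> ('a \<Rightarrow> real) \<Rightarrow> bool" where
  "balanced S off w \<longleftrightarrow>
     (\<forall>\<nu>\<in>S. (\<Sum>\<mu>\<in>S - {\<nu>}. w \<mu> * off \<mu> \<nu>) = w \<nu> * (\<Sum>\<nu>'\<in>S - {\<nu>}. off \<nu> \<nu>'))"

definition rate_graph :: "'a set \<Rightarrow> ('a \<Rightarrow> 'a \<Rightarrow> real) \<Rightarrow> 'a rel" where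
  "rate_graph S off = {(\<mu>, \<nu>). \<mu> \<in> S \<and> \<nu> \<in> S \<and> \<mu> \<noteq> \<nu> \<and> 0 < off \<mu> \<nu>}"

definition irreducible :: "'a set \<Rightarrow> ('a \<Rightarrow> 'a \<Rightarrow> real) \<Rightarrow> bool" where
  "irreducible S off \<longleftrightarrow> (\<forall>\<mu>\<in>S. \<forall>\<nu>\<in>S. (\<mu>, \<nu>) \<in> (rate_graph S off)\<^sup>*)"

lemma stationary_imp_balanced:
  assumes "finite S" and "stationary S (chain_P S off) \<pi>"
  shows "balanced S off \<pi>"
  unfolding balanced_def
proof
  fix \<nu> assume \<nu>: "\<nu> \<in> S"
  have "\<pi> \<nu> = (\<Sum>\<mu>\<in>S. \<pi> \<mu> * chain_P S off \<mu> \<nu>)"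
    using assms(2) \<nu> by (simp add: stationary_def)
  also have "\<dots> = \<pi> \<nu> * chain_P S off \<nu> \<nu> + (\<Sum>\<mu>\<in>S - {\<nu>}. \<pi> \<mu> * chain_P S off \<mu> \<nu>)"
    using assms(1) \<nu> by (simp add: sum.remove)
  also have "\<dots> = \<pi> \<nu> * (1 - (\<Sum>\<nu>'\<in>S - {\<nu>}. off \<nu> \<nu>')) + (\<Sum>\<mu>\<in>S - {\<nu>}. \<pi> \<mu> * off \<mu> \<nu>)"
    by (simp add: chain_P_def)
  finally show "(\<Sum>\<mu>\<in>S - {\<nu>}. \<pi> \<mu> * off \<mu> \<nu>) = \<pi> \<nu> * (\<Sum>\<nu>'\<in>S - {\<nu>}. off \<nu> \<nu>')"
    by (simp add: algebra_simps)
qed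

lemma balanced_diff_scaled:
  assumes "balanced S off \<pi>" and "balanced S off \<sigma>"
  shows "balanced S off (\<lambda>\<mu>. \<pi> \<mu> - c * \<sigma> \<mu>)"
  unfolding balanced_def
proof
  fix \<nu> assume "\<nu> \<in> S"
  have "(\<Sum>\<mu>\<in>S - {\<nu>}. (\<pi> \<mu> - c * \<sigma> \<mu>) * off \<mu> \<nu>)
      = (\<Sum>\<mu>\<in>S - {\<nu>}. \<pi> \<mu> * off \<mu> \<nu>) - c * (\<Sum>\<mu>\<in>S - {\<nu>}. \<sigma> \<mu> * off \<mu> \<nu>)"
    by (simp add: left_diff_distrib sum_subtractf sum_distrib_left mult.assoc)
  then show "(\<Sum>\<mu>\<in>S - {\<nu>}. (\<pi> \<mu> - c * \<sigma> \<mu>) * off \<mu> \<nu>)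
      = (\<pi> \<nu> - c * \<sigma> \<nu>) * (\<Sum>\<nu>'\<in>S - {\<nu>}. off \<nu> \<nu>')"
    using assms \<open>\<nu> \<in> S\<close> by (simp add: balanced_def algebra_simps)
qed

text \<open>The left-hand side of the balance equation at \<open>\<nu>\<close> is a sum of nonnegative terms,
  so it vanishes only if every predecessor of \<open>\<nu>\<close> does.\<close>
lemma balanced_zero_backwards:
  assumes "finite S" and "balanced S off w" and "\<forall>\<mu>\<in>S. 0 \<le> w \<mu>"
    and "\<forall>\<mu>\<in>S. \<forall>\<nu>\<in>S. \<mu> \<noteq> \<nu> \<longrightarrow> 0 \<le> off \<mu> \<nu>"
    and "(\<mu>, \<nu>) \<in> (rate_graph S off)\<^sup>*" and "w \<nu> = 0"
  shows "w \<mu> = 0"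
  using assms(5,6)
proof (induction rule: converse_rtrancl_induct)
  case (step \<mu> \<mu>')
  then have edge: "\<mu> \<in> S" "\<mu>' \<in> S" "\<mu> \<noteq> \<mu>'" "0 < off \<mu> \<mu>'" and "w \<mu>' = 0"
    by (auto simp: rate_graph_def)
  then have "(\<Sum>x\<in>S - {\<mu>'}. w x * off x \<mu>') = 0"
    using assms(2) by (simp add: balanced_def)
  moreover have "\<forall>x\<in>S - {\<mu>'}. 0 \<le> w x * off x \<mu>'"
    using assms(3,4) edge(2) by auto
  ultimately have "\<forall>x\<in>S - {\<mu>'}. w x * off x \<mu>' = 0"
    using assms(1) sum_nonneg_eq_0_iff[of "S - {\<mu>'}" "\<lambda>x. w x * off x \<mu>'"] by blast
  then have "w \<mu> * off \<mu> \<mu>' = 0"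
    using edge(1,3) by simp
  then show ?case
    using edge(4) by simp
qed

lemma stationary_proportional_to_balanced:
  assumes "finite S" and "irreducible S off"
    and "\<forall>\<mu>\<in>S. \<forall>\<nu>\<in>S. \<mu> \<noteq> \<nu> \<longrightarrow> 0 \<le> off \<mu> \<nu>"
    and "stationary S (chain_P S off) \<pi>"
    and "balanced S off \<sigma>" and "\<forall>\<mu>\<in>S. 0 < \<sigma> \<mu>"
  shows "\<exists>c>0. \<forall>\<mu>\<in>S. \<pi> \<mu> = c * \<sigma> \<mu>"
proof -
  have \<pi>_nonneg: "\<forall>\<mu>\<in>S. 0 \<le> \<pi> \<mu>" and \<pi>_sum: "sum \<pi> S = 1"
    using assms(4) by (auto simp: stationary_def)
  then have "S \<noteq> {}"
    by auto
  define c where "c = Min ((\<lambda>\<mu>. \<pi> \<mu> / \<sigma> \<mu>) ` S)"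
  have "c \<in> (\<lambda>\<mu>. \<pi> \<mu> / \<sigma> \<mu>) ` S"
    unfolding c_def using assms(1) \<open>S \<noteq> {}\<close> by (intro Min_in) auto
  then obtain \<nu> where \<nu>: "\<nu> \<in> S" "c = \<pi> \<nu> / \<sigma> \<nu>"
    by blast
  define w where "w \<mu> = \<pi> \<mu> - c * \<sigma> \<mu>" for \<mu>
  \<comment> \<open>\<open>c\<close> is the largest multiple of \<open>\<sigma>\<close> below \<open>\<pi>\<close>, so \<open>w\<close> is nonnegative and vanishes at \<open>\<nu>\<close>.\<close>
  have "0 \<le> w \<mu>" if "\<mu> \<in> S" for \<mu>
  proof -
    have "c \<le> \<pi> \<mu> / \<sigma> \<mu>"
      unfolding c_def using assms(1) that by (intro Min_le) auto
    then show ?thesis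
      using assms(6) that by (simp add: w_def pos_le_divide_eq)
  qed
  moreover have "w \<nu> = 0"
    using assms(6) \<nu> by (simp add: w_def less_imp_neq[symmetric])
  moreover have "balanced S off w"
    unfolding w_def using assms(5) stationary_imp_balanced[OF assms(1,4)]
    by (rule balanced_diff_scaled[rotated])
  ultimately have "w \<mu> = 0" if "\<mu> \<in> S" for \<mu>
    using balanced_zero_backwards[OF assms(1) _ _ assms(3)] assms(2) that \<nu>(1)
    unfolding irreducible_def by blast
  then have \<pi>_eq: "\<forall>\<mu>\<in>S. \<pi> \<mu> = c * \<sigma> \<mu>"
    by (simp add: w_def)
  have "c \<noteq> 0"
    using \<pi>_eq \<pi>_sum by auto
  moreover have "0 \<le> c"
    using \<nu> \<pi>_nonneg assms(6) by (simp add: less_imp_le)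
  ultimately show ?thesis
    using \<pi>_eq by (intro exI[of _ c]) simp
qed

lemma successively_rtrancl:
  assumes "successively (\<lambda>x y. (x, y) \<in> R) xs" and "z \<in> set xs"
  shows "(hd xs, z) \<in> R\<^sup>* \<and> (z, last xs) \<in> R\<^sup>*"
  using assms
proof (induction "\<lambda>x y. (x, y) \<in> R" xs arbitrary: z rule: successively.induct)
  case (3 x y xs)
  then have "(x, y) \<in> R" and "(y, last (y # xs)) \<in> R\<^sup>*"
    by auto
  then show ?case
    using 3 by (auto intro: converse_rtrancl_into_rtrancl)
qed auto

lemma closed_walk_imp_irreducible:
  assumes "successively (\<lambda>x y. (x, y) \<in> rate_graph S off) xs"
    and "hd xs = last xs" and "S \<subseteq> set xs"
  shows "irreducible S off"
  unfolding irreducible_def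
proof (intro ballI)
  fix \<mu> \<nu> assume "\<mu> \<in> S" "\<nu> \<in> S"
  then have "(\<mu>, last xs) \<in> (rate_graph S off)\<^sup>*" "(hd xs, \<nu>) \<in> (rate_graph S off)\<^sup>*"
    using successively_rtrancl[OF assms(1)] assms(3) by blast+
  then show "(\<mu>, \<nu>) \<in> (rate_graph S off)\<^sup>*"
    using assms(2) by simp
qed

lemma swap_rate_nonneg: "0 \<le> a \<Longrightarrow> 0 \<le> b \<Longrightarrow> 0 \<le> swap_rate a b n \<mu> \<nu>"
  unfolding swap_rate_def by (intro add_nonneg_nonneg sum_nonneg) auto

lemma DASEP_off_nonneg: "0 \<le> t \<Longrightarrow> 0 \<le> u \<Longrightarrow> 0 \<le> DASEP_off t u n p \<mu> \<nu>"
  unfolding DASEP_off_def by (intro add_nonneg_nonneg sum_nonneg swap_rate_nonneg) auto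

lemma S_n_three: "S_n [a,b,c] = {[a,b,c],[a,c,b],[b,a,c],[b,c,a],[c,a,b],[c,b,a]}"
proof -
  have "S_n [a,b,c] = permutations_of_multiset {#a,b,c#}"
    by (simp add: S_n_def permutations_of_multiset_def)
  also have "\<dots> = (\<Union>x\<in>set_mset {#a,b,c#}. (#) x ` permutations_of_multiset ({#a,b,c#} - {#x#}))"
    by (rule permutations_of_multiset_nonempty) simp
  also have "\<dots> = (#) a ` permutations_of_multiset {#b,c#} \<union> (#) b ` permutations_of_multiset {#a,c#}
      \<union> (#) c ` permutations_of_multiset {#a,b#}"
    by (simp add: add_mset_commute[of b a] add_mset_commute[of c] Un_assoc)
  finally show ?thesis
    by (auto simp: permutations_of_multiset_doubleton)
qed

lemma S_n_double: "S_n [a,a,0] = {[a,a,0],[a,0,a],[0,a,a]}"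
  by (auto simp: S_n_three)

lemma swap_rate_3:
  "swap_rate a b 3 \<mu> \<nu> =
     (if \<mu> ! 0 \<noteq> \<mu> ! 1 \<and> \<nu> = swap_at \<mu> 0 1 then (if \<mu> ! 0 > \<mu> ! 1 then a else b) else 0)
   + (if \<mu> ! 1 \<noteq> \<mu> ! 2 \<and> \<nu> = swap_at \<mu> 1 2 then (if \<mu> ! 1 > \<mu> ! 2 then a else b) else 0)
   + (if \<mu> ! 0 \<noteq> \<mu> ! 2 \<and> \<nu> = swap_at \<mu> 0 2 then (if \<mu> ! 2 > \<mu> ! 0 then a else b) else 0)"
proof -
  have "{1..(3::nat) - 1} = {1, 2}"
    by auto
  then show ?thesis
    by (simp add: swap_rate_def)
qed

lemma DASEP_off_3_2:
  "DASEP_off t u 3 2 \<mu> \<nu> = swap_rate (t/9) (1/9) 3 \<mu> \<nu>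
   + (\<Sum>k\<in>{0,1,2}.
        (if \<mu> ! k = 1 \<and> \<nu> = \<mu>[k := \<mu> ! k + 1] then u/9 else 0)
      + (if 2 \<le> \<mu> ! k \<and> \<nu> = \<mu>[k := \<mu> ! k - 1] then 1/9 else 0))"
proof -
  have "{0..<(3::nat)} = {0, 1, 2}"
    by auto
  then show ?thesis
    unfolding DASEP_off_def by (intro arg_cong2[where f="(+)"] sum.cong) auto
qed

section \<open>The ASEP on three sites\<close>

definition asep3_weight :: "real \<Rightarrow> nat list \<Rightarrow> nat list \<Rightarrow> real" where
  "asep3_weight t lam \<mu> = (if \<mu> \<in> {lam, rotate1 lam, rotate1 (rotate1 lam)} then t + 2 else 2*t + 1)"

lemma asep3_weight_pos: "0 \<le> t \<Longrightarrow> 0 < asep3_weight t lam \<mu>"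
  by (simp add: asep3_weight_def)

lemma asep3_balanced_distinct:
  assumes "0 < b" and "b < a"
  shows "balanced (S_n [a,b,0]) (swap_rate (t/3) (1/3) 3) (asep3_weight t [a,b,0])"
  using assms unfolding balanced_def swap_rate_3 S_n_three
  by (simp add: swap_at_def asep3_weight_def insert_Diff_if field_simps)

lemma asep3_balanced_double:
  assumes "0 < a"
  shows "balanced (S_n [a,a,0]) (swap_rate (t/3) (1/3) 3) (asep3_weight t [a,a,0])"
  using assms unfolding balanced_def swap_rate_3 S_n_double
  by (simp add: swap_at_def asep3_weight_def insert_Diff_if field_simps)

lemma asep3_irreducible:
  assumes "0 < b" and "b \<le> a"
  shows "irreducible (S_n [a,b,0]) (swap_rate (t/3) (1/3) 3)"
proof (rule closed_walk_imp_irreducible)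
  let ?xs = "[[a,b,0],[0,b,a],[b,0,a],[b,a,0],[0,a,b],[a,0,b],[a,b,0]]"
  show "successively (\<lambda>x y. (x, y) \<in> rate_graph (S_n [a,b,0]) (swap_rate (t/3) (1/3) 3)) ?xs"
    using assms by (auto simp: rate_graph_def S_n_three swap_rate_3 swap_at_def)
  show "hd ?xs = last ?xs" "S_n [a,b,0] \<subseteq> set ?xs"
    by (auto simp: S_n_three)
qed

lemma asep3_stationary:
  assumes "0 \<le> t" and "0 < b" and "b \<le> a"
    and "stationary (S_n [a,b,0]) (ASEP_P t 3 [a,b,0]) \<pi>"
  shows "\<exists>c>0. \<forall>\<mu>\<in>S_n [a,b,0]. \<pi> \<mu> = c * asep3_weight t [a,b,0] \<mu>"
proof (rule stationary_proportional_to_balanced)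
  show "finite (S_n [a,b,0])"
    by (simp add: S_n_three)
  show "irreducible (S_n [a,b,0]) (swap_rate (t/3) (1/3) 3)"
    using assms(2,3) by (rule asep3_irreducible)
  show "\<forall>\<mu>\<in>S_n [a,b,0]. \<forall>\<nu>\<in>S_n [a,b,0]. \<mu> \<noteq> \<nu> \<longrightarrow> 0 \<le> swap_rate (t/3) (1/3) 3 \<mu> \<nu>"
    using assms(1) by (simp add: swap_rate_nonneg)
  show "stationary (S_n [a,b,0]) (chain_P (S_n [a,b,0]) (swap_rate (t/3) (1/3) 3)) \<pi>"
    using assms(4) by (simp add: ASEP_P_def)
  show "balanced (S_n [a,b,0]) (swap_rate (t/3) (1/3) 3) (asep3_weight t [a,b,0])"
    using assms(2,3) asep3_balanced_distinct asep3_balanced_double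
    by (cases "b = a") auto
  show "\<forall>\<mu>\<in>S_n [a,b,0]. 0 < asep3_weight t [a,b,0] \<mu>"
    using assms(1) by (simp add: asep3_weight_pos)
qed

section \<open>The DASEP(3,2,2)\<close>

lemma DASEP_states_3_2_2: "DASEP_states 3 2 2 = S_n [1,1,0] \<union> S_n [2,1,0] \<union> S_n [2,2,0]"
proof
  show "S_n [1,1,0] \<union> S_n [2,1,0] \<union> S_n [2,2,0] \<subseteq> DASEP_states 3 2 2"
    by (simp add: S_n_three DASEP_states_def)
  show "DASEP_states 3 2 2 \<subseteq> S_n [1,1,0] \<union> S_n [2,1,0] \<union> S_n [2,2,0]"
  proof
    fix \<mu> assume \<mu>: "\<mu> \<in> DASEP_states 3 2 2"
    then obtain a b c where abc: "\<mu> = [a,b,c]"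
      by (auto simp: DASEP_states_def length_Suc_conv numeral_3_eq_3)
    have "a = 0 \<or> a = 1 \<or> a = 2" "b = 0 \<or> b = 1 \<or> b = 2" "c = 0 \<or> c = 1 \<or> c = 2"
      using \<mu> by (auto simp: abc DASEP_states_def)
    moreover have "length (filter (\<lambda>x. x \<noteq> 0) [a,b,c]) = 2"
      using \<mu> by (simp add: abc DASEP_states_def)
    ultimately show "\<mu> \<in> S_n [1,1,0] \<union> S_n [2,1,0] \<union> S_n [2,2,0]"
      unfolding abc S_n_three by (elim disjE) simp_all
  qed
qed

definition dasep_weight :: "real \<Rightarrow> real \<Rightarrow> nat list \<Rightarrow> real" where
  "dasep_weight t u \<mu> =
     (if \<mu> \<in> {[1,1,0],[1,0,1],[0,1,1]} then 3*t + 4 + u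
      else if \<mu> \<in> {[2,2,0],[2,0,2],[0,2,2]} then u^2 * (3*t + 4 + u)
      else if \<mu> \<in> {[2,1,0],[1,0,2],[0,2,1]} then u * (2*t + 5 + u)
      else u * (4*t + 3 + u))"

lemma dasep_balanced: "balanced (DASEP_states 3 2 2) (DASEP_off t u 3 2) (dasep_weight t u)"
  unfolding DASEP_states_3_2_2 S_n_double
  unfolding S_n_three balanced_def Un_insert_left Un_empty_left ball_simps
  by (intro conjI;
      simp add: DASEP_off_3_2 swap_rate_3 swap_at_def dasep_weight_def insert_Diff_if;
      simp add: field_simps power2_eq_square)

lemma dasep_weight_pos: "0 \<le> t \<Longrightarrow> 0 < u \<Longrightarrow> 0 < dasep_weight t u \<mu>"
  by (simp add: dasep_weight_def)

lemma dasep_irreducible: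
  assumes "0 < u"
  shows "irreducible (DASEP_states 3 2 2) (DASEP_off t u 3 2)"
proof (rule closed_walk_imp_irreducible)
  let ?xs = "[[1,1,0],[2,1,0],[2,2,0],[0,2,2],[2,0,2],[1,0,2],[1,2,0],[0,2,1],[2,0,1],[2,1,0],
      [0,1,2],[0,1,1],[1,0,1],[1,1,0]] :: nat list list"
  show "successively (\<lambda>x y. (x, y) \<in> rate_graph (DASEP_states 3 2 2) (DASEP_off t u 3 2)) ?xs"
    using assms
    by (simp add: rate_graph_def DASEP_states_3_2_2 S_n_three DASEP_off_3_2 swap_rate_3 swap_at_def)
  show "hd ?xs = last ?xs" "DASEP_states 3 2 2 \<subseteq> set ?xs"
    by (auto simp: DASEP_states_3_2_2 S_n_three)
qed

lemma dasep_stationary: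
  assumes "0 \<le> t" and "0 < u"
    and "stationary (DASEP_states 3 2 2) (DASEP_P t u 3 2 2) \<pi>"
  shows "\<exists>c>0. \<forall>\<mu>\<in>DASEP_states 3 2 2. \<pi> \<mu> = c * dasep_weight t u \<mu>"
proof (rule stationary_proportional_to_balanced)
  show "finite (DASEP_states 3 2 2)"
    by (simp add: DASEP_states_3_2_2 S_n_three)
  show "irreducible (DASEP_states 3 2 2) (DASEP_off t u 3 2)"
    using assms(2) by (rule dasep_irreducible)
  show "\<forall>\<mu>\<in>DASEP_states 3 2 2. \<forall>\<nu>\<in>DASEP_states 3 2 2. \<mu> \<noteq> \<nu> \<longrightarrow> 0 \<le> DASEP_off t u 3 2 \<mu> \<nu>"
    using assms(1,2) by (simp add: DASEP_off_nonneg)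
  show "stationary (DASEP_states 3 2 2) (chain_P (DASEP_states 3 2 2) (DASEP_off t u 3 2)) \<pi>"
    using assms(3) by (simp add: DASEP_P_def)
  show "balanced (DASEP_states 3 2 2) (DASEP_off t u 3 2) (dasep_weight t u)"
    by (rule dasep_balanced)
  show "\<forall>\<mu>\<in>DASEP_states 3 2 2. 0 < dasep_weight t u \<mu>"
    using assms(1,2) by (simp add: dasep_weight_pos)
qed

lemma partition_3_2_2_cases:
  assumes "is_partition 3 lam" and "\<forall>x\<in>set lam. x \<le> 2"
    and "length (filter (\<lambda>x. x \<noteq> 0) lam) = 2"
  shows "lam \<in> {[1,1,0], [2,1,0], [2,2,0]}"
proof -
  obtain a b c where abc: "lam = [a,b,c]"
    using assms(1) by (auto simp: is_partition_def length_Suc_conv numeral_3_eq_3)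
  have "b \<le> a" "c \<le> b"
    using assms(1) by (auto simp: abc is_partition_def)
  moreover have "a = 0 \<or> a = 1 \<or> a = 2" "b = 0 \<or> b = 1 \<or> b = 2" "c = 0 \<or> c = 1 \<or> c = 2"
    using assms(2) by (auto simp: abc)
  ultimately show ?thesis
    using assms(3) unfolding abc by (elim disjE) simp_all
qed

lemma dasep_weight_1_constant_on_S_n:
  assumes "lam \<in> {[1,1,0], [2,1,0], [2,2,0]}" and "\<mu> \<in> S_n lam" and "\<nu> \<in> S_n lam"
  shows "dasep_weight 1 u \<mu> = dasep_weight 1 u \<nu>"
proof -
  have "dasep_weight 1 u \<mu> = dasep_weight 1 u lam" if "\<mu> \<in> S_n lam" for \<mu>
    using assms(1) that by (elim insertE emptyE; simp add: S_n_three; elim disjE; simp add: dasep_weight_def)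
  then show ?thesis
    using assms(2,3) by simp
qed

lemma ratios_agree_at_1:
  assumes "0 < u" and "t = 1" and "lam \<in> {[1,1,0], [2,1,0], [2,2,0]}"
    and "0 < c" and "\<forall>\<mu>\<in>S_n lam. Pr \<mu> = c * asep3_weight t lam \<mu>"
    and "0 < d" and "\<forall>\<mu>\<in>S_n lam. Pd \<mu> = d * dasep_weight t u \<mu>"
    and "\<mu> \<in> S_n lam" and "\<nu> \<in> S_n lam"
  shows "Pr \<mu> / Pr \<nu> = Pd \<mu> / Pd \<nu>"
proof -
  have "Pr \<mu> = 3 * c" "Pr \<nu> = 3 * c"
    using assms(2,5,8,9) by (simp_all add: asep3_weight_def)
  moreover have "Pd \<mu> = Pd \<nu>"
    using assms(2,3,7-9) dasep_weight_1_constant_on_S_n by metis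
  moreover have "0 < Pd \<nu>"
    using assms(1,2,6,7,9) dasep_weight_pos[of 1 u] by simp
  ultimately show ?thesis
    using assms(4) by simp
qed

lemma weight_ratios_agree_imp_t_eq_1:
  assumes "0 \<le> t" and "0 < u"
    and "asep3_weight t [2,1,0] [2,1,0] / asep3_weight t [2,1,0] [2,0,1]
       = dasep_weight t u [2,1,0] / dasep_weight t u [2,0,1]"
  shows "t = 1"
proof -
  have "(t + 2) / (2*t + 1) = (2*t + 5 + u) / (4*t + 3 + u)"
    using assms by (simp add: asep3_weight_def dasep_weight_def)
  then have "(t + 2) * (4*t + 3 + u) = (2*t + 5 + u) * (2*t + 1)"
    using assms(1,2) by (simp add: field_simps)
  moreover have "(t + 2) * (4*t + 3 + u) - (2*t + 5 + u) * (2*t + 1) = (1 - t) * (1 + u)"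
    by algebra
  ultimately have "(1 - t) * (1 + u) = 0"
    by simp
  then show ?thesis
    using assms(2) by simp
qed

theorem mainTheorem1:
  fixes t u :: real
    and Pr :: "nat list \<Rightarrow> nat list \<Rightarrow> real"
    and Pd :: "nat list \<Rightarrow> real"
  assumes "0 \<le> t" and "t \<le> 1" and "u > 0"
    and "stationary (DASEP_states 3 2 2) (DASEP_P t u 3 2 2) Pd"
    and "\<And>lam. is_partition 3 lam \<Longrightarrow> stationary (S_n lam) (ASEP_P t 3 lam) (Pr lam)"
  shows "t = 1 \<longleftrightarrow>
    (\<forall>lam. is_partition 3 lam \<and> (\<forall>x\<in>set lam. x \<le> 2) \<and> length (filter (\<lambda>x. x \<noteq> 0) lam) = 2 \<longrightarrow>
       (\<forall>\<mu>\<in>S_n lam. \<forall>\<nu>\<in>S_n lam. Pr lam \<mu> / Pr lam \<nu> = Pd \<mu> / Pd \<nu>))"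
  (is "_ \<longleftrightarrow> (\<forall>lam. ?admissible lam \<longrightarrow> ?ratios lam)")
proof -
  obtain d where d: "0 < d" "\<forall>\<mu>\<in>DASEP_states 3 2 2. Pd \<mu> = d * dasep_weight t u \<mu>"
    using dasep_stationary assms(1,3,4) by blast
  have Pr: "\<exists>c>0. \<forall>\<mu>\<in>S_n lam. Pr lam \<mu> = c * asep3_weight t lam \<mu>"
    if "lam \<in> {[1,1,0], [2,1,0], [2,2,0]}" for lam
    using that asep3_stationary[OF assms(1)] assms(5) by (auto simp: is_partition_def)
  have Pd: "\<forall>\<mu>\<in>S_n lam. Pd \<mu> = d * dasep_weight t u \<mu>"
    if "lam \<in> {[1,1,0], [2,1,0], [2,2,0]}" for lam
    using that d(2) by (auto simp: DASEP_states_3_2_2)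
  show ?thesis
  proof
    assume "t = 1"
    show "\<forall>lam. ?admissible lam \<longrightarrow> ?ratios lam"
    proof (intro allI impI ballI)
      fix lam \<mu> \<nu> assume "?admissible lam" and \<mu>\<nu>: "\<mu> \<in> S_n lam" "\<nu> \<in> S_n lam"
      then have lam: "lam \<in> {[1,1,0], [2,1,0], [2,2,0]}"
        using partition_3_2_2_cases by blast
      then show "Pr lam \<mu> / Pr lam \<nu> = Pd \<mu> / Pd \<nu>"
        using Pr[OF lam] ratios_agree_at_1[OF assms(3) \<open>t = 1\<close> lam _ _ d(1) Pd[OF lam] \<mu>\<nu>] by blast
    qed
  next
    assume "\<forall>lam. ?admissible lam \<longrightarrow> ?ratios lam"
    then have "Pr [2,1,0] [2,1,0] / Pr [2,1,0] [2,0,1] = Pd [2,1,0] / Pd [2,0,1]"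
      by (simp add: is_partition_def S_n_three)
    then show "t = 1"
      using Pr[of "[2,1,0]"] Pd[of "[2,1,0]"] d(1) weight_ratios_agree_imp_t_eq_1[OF assms(1,3)]
      by (auto simp: S_n_three)
  qed
qed

end
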